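(* Let $f:[0,1]\to[0,1]$ be continuous and strictly increasing with $f(0)=0$, $f(1)=1$, and $f(y)=e$ for some $y,e\in\,]0,1[$ with $y>e$; put $x=f(e)$ (so $x<e$). Let $a=\lim_{n\to+\infty}f^{(n)}(x)$ and $d=\lim_{n\to+\infty}f^{(-n)}(x)$. Let $F:[x,e]^2\to[f(x),e]$ be commutative and non-decreasing with $F(s,e)=s$ and $F(s,x)=f(s)$ for all $s\in[x,e]$, and such that for all $s,t,u\in\,]x,e]$ with $F(s,t)\in\,]f^{(n+1)}(e),f^{(n)}(e)]$ and $F(t,u)\in\,]f^{(m+1)}(e),f^{(m)}(e)]$, $n,m\in\{0,1\}$, $$f^{(m)}\big(F(s,f^{(-m)}(F(t,u)))\big)=f^{(n)}\big(F(f^{(-n)}(F(s,t)),u)\big).$$ Then the function $U:]a,d[^2\to\,]a,d[$ given by $$U(s,t)=f^{(n+m)}\big(F(f^{(-n)}(s),f^{(-m)}(t))\big)\quad\text{if }s\in\,]f^{(n+1)}(e),f^{(n)}(e)],\ t\in\,]f^{(m+1)}(e),f^{(m)}(e)],\ n,m\in\mathbb{Z},$$ is well defined and is a uninorm on $]a,d[$, i.e., it is commutative, associative, non-decreasing in each variable, and $e$ is its neutral element.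
   Context: For a continuous strictly increasing bijection $f:[0,1]\to[0,1]$: $f^{(0)}=\mathrm{id}$, $f^{(n)}=f\circ f^{(n-1)}$ and $f^{(-n)}=f^{-1}\circ f^{(-n+1)}$ for $n\in\mathbb{N}$, where $f^{-1}$ is the inverse function of $f$. *)

theory Defs
  imports "HOL-Analysis.Analysis"
begin

definition fiter :: "(real \<Rightarrow> real) \<Rightarrow> int \<Rightarrow> real \<Rightarrow> real" where
  "fiter f n = (if 0 \<le> n then f ^^ nat n else inv_into {0..1} f ^^ nat (- n))"

definition lvl :: "(real \<Rightarrow> real) \<Rightarrow> real \<Rightarrow> real \<Rightarrow> int" where
  "lvl f e s = (THE n::int. fiter f (n + 1) e < s \<and> s \<le> fiter f n e)"

definition Uext :: "(real \<Rightarrow> real) \<Rightarrow> (real \<Rightarrow> real \<Rightarrow> real) \<Rightarrow> real \<Rightarrow> real \<Rightarrow> real \<Rightarrow> real" where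
  "Uext f F e s t = fiter f (lvl f e s + lvl f e t)
      (F (fiter f (- lvl f e s) s) (fiter f (- lvl f e t) t))"

definition uninorm_on :: "real set \<Rightarrow> (real \<Rightarrow> real \<Rightarrow> real) \<Rightarrow> real \<Rightarrow> bool" where
  "uninorm_on I U e \<longleftrightarrow> e \<in> I \<and>
     (\<forall>s\<in>I. \<forall>t\<in>I. U s t \<in> I) \<and>
     (\<forall>s\<in>I. \<forall>t\<in>I. U s t = U t s) \<and>
     (\<forall>s\<in>I. \<forall>t\<in>I. \<forall>u\<in>I. U s (U t u) = U (U s t) u) \<and>
     (\<forall>s\<in>I. \<forall>s'\<in>I. \<forall>t\<in>I. s \<le> s' \<longrightarrow> U s t \<le> U s' t) \<and>
     (\<forall>s\<in>I. \<forall>t\<in>I. \<forall>t'\<in>I. t \<le> t' \<longrightarrow> U s t \<le> U s t') \<and>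
     (\<forall>s\<in>I. U s e = s)"

end

theory Submission
  imports Defs
begin

text \<open>The orbit \<open>E k = f\<^sup>k(e)\<close> is strictly decreasing because \<open>f e < e\<close>, so \<open>]x, e]\<close> is a
fundamental domain: the intervals \<open>]E (k+1), E k] = f\<^sup>k(]x, e])\<close> tile \<open>]a, d[\<close>, and every \<open>s\<close>
is \<open>f\<^sup>k(w)\<close> for a unique level \<open>k\<close> and a unique representative \<open>w \<in> ]x, e]\<close>. \<open>U\<close> is \<open>F\<close>
transported along this decomposition. Since \<open>F\<close> maps \<open>]x, e]\<^sup>2\<close> into \<open>]f x, e]\<close>, a value of \<open>F\<close>
has level 0 or 1, so the level of \<open>U s t\<close> is the sum of the levels of \<open>s\<close>, \<open>t\<close> and of a value
of \<open>F\<close>. Commutativity, monotonicity and neutrality then reduce to those of \<open>F\<close>, and associativity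
to the hypothesis on \<open>F\<close> for levels 0 and 1.\<close>

lemma funpow_strict_mono_on:
  assumes "strict_mono_on S h" and "h ` S \<subseteq> S"
  shows "strict_mono_on S (h ^^ n)"
proof (induction n)
  case 0
  show ?case by (simp add: strict_mono_on_ident)
next
  case (Suc n)
  have into: "(h ^^ n) z \<in> S" if "z \<in> S" for z
    using that assms(2) by (induction n) auto
  show ?case
  proof (rule strict_mono_onI)
    fix r s assume "r \<in> S" "s \<in> S" "r < s"
    then have "(h ^^ n) r < (h ^^ n) s"
      using Suc strict_mono_onD by blast
    with \<open>r \<in> S\<close> \<open>s \<in> S\<close> show "(h ^^ Suc n) r < (h ^^ Suc n) s"
      using strict_mono_onD[OF assms(1)] into by simp
  qed
qed

lemma strict_mono_on_inv_into:
  fixes h :: "'a::linorder \<Rightarrow> 'b::linorder"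
  assumes "strict_mono_on S h"
  shows "strict_mono_on (h ` S) (inv_into S h)"
proof (rule strict_mono_onI, elim imageE)
  fix u v p q assume "u < v" "p \<in> S" "q \<in> S" "u = h p" "v = h q"
  moreover have "inj_on h S"
    using assms by (rule strict_mono_on_imp_inj_on)
  ultimately show "inv_into S h u < inv_into S h v"
    using strict_mono_on_less[OF assms] by simp
qed

lemma int_seq_crossing:
  fixes E :: "int \<Rightarrow> 'a::linorder"
  assumes "j \<le> k" and "s \<le> E j" and "E k < s"
  shows "\<exists>n. E (n + 1) < s \<and> s \<le> E n"
  using assms
proof (induction k rule: int_ge_induct)
  case base
  then show ?case by simp
next
  case (step i)
  then show ?case by (cases "E i < s") auto
qed

lemma uninorm_onI:
  assumes "e \<in> I"
    and closed: "\<And>s t. s \<in> I \<Longrightarrow> t \<in> I \<Longrightarrow> U s t \<in> I"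
    and comm: "\<And>s t. s \<in> I \<Longrightarrow> t \<in> I \<Longrightarrow> U s t = U t s"
    and "\<And>s t u. s \<in> I \<Longrightarrow> t \<in> I \<Longrightarrow> u \<in> I \<Longrightarrow> U s (U t u) = U (U s t) u"
    and mono: "\<And>s s' t. s \<in> I \<Longrightarrow> s' \<in> I \<Longrightarrow> t \<in> I \<Longrightarrow> s \<le> s' \<Longrightarrow> U s t \<le> U s' t"
    and "\<And>s. s \<in> I \<Longrightarrow> U s e = s"
  shows "uninorm_on I U e"
proof -
  have mono2: "U s t \<le> U s t'" if "s \<in> I" "t \<in> I" "t' \<in> I" "t \<le> t'" for s t t'
    using mono[of t t' s] comm that by simp
  show ?thesis
    unfolding uninorm_on_def by (intro conjI ballI impI) (rule assms mono2; assumption)+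
qed

locale increasing_bijection =
  fixes f :: "real \<Rightarrow> real"
  assumes f_strict_mono: "strict_mono_on {0..1} f"
    and f_bij: "bij_betw f {0..1} {0..1}"
begin

abbreviation finv :: "real \<Rightarrow> real" where
  "finv \<equiv> inv_into {0..1} f"

lemma image_f: "f ` {0..1} = {0..1}"
  using f_bij by (rule bij_betw_imp_surj_on)

lemma bij_betw_fiter: "bij_betw (fiter f n) {0..1} {0..1}"
  unfolding fiter_def using bij_betw_funpow[OF f_bij] bij_betw_funpow[OF bij_betw_inv_into[OF f_bij]]
  by simp

lemma fiter_in: "z \<in> {0..1} \<Longrightarrow> fiter f n z \<in> {0..1}"
  using bij_betw_fiter bij_betwE by blast

lemma strict_mono_fiter: "strict_mono_on {0..1} (fiter f n)"
proof -
  have finv_mono: "strict_mono_on {0..1} finv"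
    using strict_mono_on_inv_into[OF f_strict_mono] by (simp only: image_f)
  have finv_into: "finv ` {0..1} \<subseteq> {0..1}"
    using bij_betw_imp_surj_on[OF bij_betw_inv_into[OF f_bij]] by (rule equalityD1)
  have "strict_mono_on {0..1} (finv ^^ k)" for k
    using funpow_strict_mono_on[OF finv_mono finv_into] .
  moreover have "strict_mono_on {0..1} (f ^^ k)" for k
    using funpow_strict_mono_on[OF f_strict_mono] image_f by (simp only: order_refl)
  ultimately show ?thesis
    unfolding fiter_def by simp
qed

lemma fiter_less_iff: "z \<in> {0..1} \<Longrightarrow> w \<in> {0..1} \<Longrightarrow> fiter f n z < fiter f n w \<longleftrightarrow> z < w"
  using strict_mono_fiter strict_mono_on_less by blast

lemma fiter_le_iff: "z \<in> {0..1} \<Longrightarrow> w \<in> {0..1} \<Longrightarrow> fiter f n z \<le> fiter f n w \<longleftrightarrow> z \<le> w"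
  using strict_mono_fiter strict_mono_on_less_eq by blast

lemma fiter_0 [simp]: "fiter f 0 z = z"
  by (simp add: fiter_def)

lemma fiter_1 [simp]: "fiter f 1 z = f z"
  by (simp add: fiter_def)

lemma fiter_nonpos: "n \<le> 0 \<Longrightarrow> fiter f n = finv ^^ nat (- n)"
  by (cases "n = 0") (auto simp: fiter_def)

lemma fiter_succ:
  assumes "z \<in> {0..1}"
  shows "fiter f (n + 1) z = f (fiter f n z)"
proof (cases "0 \<le> n")
  case True
  then have "nat (n + 1) = Suc (nat n)" by simp
  with True show ?thesis by (simp add: fiter_def)
next
  case False
  then have "nat (- n) = Suc (nat (- (n + 1)))" by simp
  then have "fiter f n z = finv (fiter f (n + 1) z)"
    using False by (simp add: fiter_nonpos)
  moreover have "fiter f (n + 1) z \<in> f ` {0..1}"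
    using fiter_in[OF assms] by (simp only: image_f)
  ultimately show ?thesis
    by (simp add: f_inv_into_f)
qed

lemma fiter_pred:
  assumes "z \<in> {0..1}"
  shows "fiter f (n - 1) z = finv (fiter f n z)"
  using fiter_succ[OF assms, of "n - 1"] fiter_in[OF assms] bij_betw_imp_inj_on[OF f_bij]
  by (simp add: inv_into_f_f)

lemma fiter_add:
  assumes z: "z \<in> {0..1}"
  shows "fiter f (m + n) z = fiter f m (fiter f n z)"
proof (induction m rule: int_induct[where k = 0])
  case base
  show ?case by simp
next
  case (step1 i)
  have "fiter f (i + 1 + n) z = f (fiter f (i + n) z)"
    using fiter_succ[OF z, of "i + n"] by (simp add: algebra_simps)
  with step1 show ?case
    using fiter_succ fiter_in z by simp
next
  case (step2 i)
  have "fiter f (i - 1 + n) z = finv (fiter f (i + n) z)"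
    using fiter_pred[OF z, of "i + n"] by (simp add: algebra_simps)
  with step2 show ?case
    using fiter_pred fiter_in z by simp
qed

lemma fiter_cancel: "z \<in> {0..1} \<Longrightarrow> fiter f (- n) (fiter f n z) = z"
  using fiter_add[of z "- n" n] by simp

end

locale descending_orbit = increasing_bijection +
  fixes e x a d :: real
  assumes e_in: "e \<in> {0..1}"
    and x_def: "x = f e"
    and x_less_e: "x < e"
    and a_lim: "(\<lambda>n. fiter f (int n) x) \<longlonglongrightarrow> a"
    and d_lim: "(\<lambda>n. fiter f (- int n) x) \<longlonglongrightarrow> d"
begin

abbreviation E :: "int \<Rightarrow> real" where
  "E k \<equiv> fiter f k e"

abbreviation level :: "real \<Rightarrow> int" where
  "level \<equiv> lvl f e"

definition rep :: "real \<Rightarrow> real" where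
  "rep s = fiter f (- level s) s"

lemma x_in: "x \<in> {0..1}"
  using fiter_in[OF e_in, of 1] x_def by simp

lemma E_in: "E k \<in> {0..1}"
  using fiter_in[OF e_in] .

lemma fiter_x: "fiter f k x = E (k + 1)"
  using fiter_add[OF e_in, of k 1] x_def by simp

lemma E_succ_less: "E (k + 1) < E k"
  using fiter_less_iff[OF x_in e_in, of k] x_less_e fiter_x by simp

lemma E_less:
  assumes "k < l"
  shows "E l < E k"
proof -
  from assms have "k + 1 \<le> l" by simp
  then show ?thesis
  proof (induction l rule: int_ge_induct)
    case base
    show ?case by (rule E_succ_less)
  next
    case (step i)
    then show ?case
      using E_succ_less[of i] by linarith
  qed
qed

lemma E_less_iff: "E l < E k \<longleftrightarrow> k < l"
  using E_less by (metis less_asym linorder_neqE_linordered_idom)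

lemma E_le_iff: "E l \<le> E k \<longleftrightarrow> k \<le> l"
  using E_less_iff[of k l] by (simp add: not_less[symmetric])

lemma a_less_E: "a < E k"
proof -
  have "decseq (\<lambda>n. fiter f (int n) x)"
    unfolding decseq_def fiter_x by (simp add: E_le_iff)
  then have "a \<le> E (int (nat k + 1) + 1)"
    using decseq_ge[OF _ a_lim] fiter_x by metis
  also have "\<dots> < E k"
    by (simp add: E_less_iff)
  finally show ?thesis .
qed

lemma E_less_d: "E k < d"
proof -
  have "incseq (\<lambda>n. fiter f (- int n) x)"
    unfolding incseq_def fiter_x by (simp add: E_le_iff)
  then have "E (- int (nat (- k) + 2) + 1) \<le> d"
    using incseq_le[OF _ d_lim] fiter_x by metis
  moreover have "E k < E (- int (nat (- k) + 2) + 1)"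
    by (simp add: E_less_iff)
  ultimately show ?thesis by simp
qed

lemma domain_subset: "{a<..<d} \<subseteq> {0..1}"
proof -
  have "0 \<le> a"
    using LIMSEQ_le_const[OF a_lim] fiter_in[OF x_in] by auto
  moreover have "d \<le> 1"
    using LIMSEQ_le_const2[OF d_lim] fiter_in[OF x_in] by auto
  ultimately show ?thesis by auto
qed

lemma level_unique: "E (n + 1) < s \<and> s \<le> E n \<Longrightarrow> E (m + 1) < s \<and> s \<le> E m \<Longrightarrow> n = m"
  using E_le_iff[of n "m + 1"] E_le_iff[of m "n + 1"] by auto

lemma level_ex1:
  assumes "s \<in> {a<..<d}"
  shows "\<exists>!n. E (n + 1) < s \<and> s \<le> E n"
proof -
  obtain N where "fiter f (int N) x < s"
    using order_tendstoD(2)[OF a_lim] assms by (auto simp: eventually_sequentially)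
  moreover obtain M where "s < fiter f (- int M) x"
    using order_tendstoD(1)[OF d_lim] assms by (auto simp: eventually_sequentially)
  ultimately have "\<exists>n. E (n + 1) < s \<and> s \<le> E n"
    using int_seq_crossing[of "- int M + 1" "int N + 1" s E] by (simp add: fiter_x)
  then show ?thesis
    using level_unique by blast
qed

lemma level_eq: "E (k + 1) < s \<Longrightarrow> s \<le> E k \<Longrightarrow> level s = k"
  unfolding lvl_def by (rule the1_equality) (use level_unique in blast)+

lemma level_bounds: "s \<in> {a<..<d} \<Longrightarrow> E (level s + 1) < s \<and> s \<le> E (level s)"
  unfolding lvl_def by (rule theI') (rule level_ex1)

lemma rep_in:
  assumes s: "s \<in> {a<..<d}"
  shows "rep s \<in> {x<..e}"
proof -
  have s01: "s \<in> {0..1}"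
    using s domain_subset by blast
  have "fiter f (- level s) (E (level s + 1)) = x" "fiter f (- level s) (E (level s)) = e"
    using fiter_add[OF e_in, of "- level s" "level s + 1", symmetric]
      fiter_add[OF e_in, of "- level s" "level s", symmetric] x_def
    by simp_all
  then show ?thesis
    using level_bounds[OF s] fiter_less_iff[OF E_in s01] fiter_le_iff[OF s01 E_in]
    unfolding rep_def by (metis greaterThanAtMost_iff)
qed

lemma fiter_level_rep: "s \<in> {a<..<d} \<Longrightarrow> fiter f (level s) (rep s) = s"
  unfolding rep_def using domain_subset fiter_cancel[of s "- level s"] by auto

lemma rep_in_01: "s \<in> {a<..<d} \<Longrightarrow> rep s \<in> {x..e}"
  using rep_in by fastforce

lemma fundamental_domain_01: "w \<in> {x<..e} \<Longrightarrow> w \<in> {0..1}"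
  using x_in e_in by auto

lemma fiter_bounds:
  assumes w: "w \<in> {x<..e}"
  shows "E (k + 1) < fiter f k w \<and> fiter f k w \<le> E k"
proof -
  have w01: "w \<in> {0..1}"
    using w by (rule fundamental_domain_01)
  then show ?thesis
    using fiter_x[of k] fiter_less_iff[OF x_in w01, of k] fiter_le_iff[OF w01 e_in, of k] w
    by simp
qed

lemma fiter_fundamental_domain:
  assumes w: "w \<in> {x<..e}"
  shows fiter_mem_domain: "fiter f k w \<in> {a<..<d}"
    and level_fiter: "level (fiter f k w) = k"
    and rep_fiter: "rep (fiter f k w) = w"
proof -
  show "fiter f k w \<in> {a<..<d}"
    using fiter_bounds[OF w, of k] a_less_E[of "k + 1"] E_less_d[of k] by simp
  show "level (fiter f k w) = k"
    using fiter_bounds[OF w, of k] level_eq by blast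
  then show "rep (fiter f k w) = w"
    unfolding rep_def using fiter_cancel[OF fundamental_domain_01[OF w]] by simp
qed

lemma fiter_antimono:
  assumes w: "w \<in> {x<..e}" and "l \<le> k"
  shows "fiter f k w \<le> fiter f l w"
proof (cases "l = k")
  case False
  with \<open>l \<le> k\<close> have "E k \<le> E (l + 1)"
    by (simp add: E_le_iff)
  then show ?thesis
    using fiter_bounds[OF w, of k] fiter_bounds[OF w, of l] by linarith
qed simp

end

locale uninorm_construction = descending_orbit +
  fixes F :: "real \<Rightarrow> real \<Rightarrow> real"
  assumes F_range: "\<forall>s\<in>{x..e}. \<forall>t\<in>{x..e}. F s t \<in> {f x..e}"
    and F_comm: "\<forall>s\<in>{x..e}. \<forall>t\<in>{x..e}. F s t = F t s"
    and F_mono1: "\<forall>s\<in>{x..e}. \<forall>s'\<in>{x..e}. \<forall>t\<in>{x..e}. s \<le> s' \<longrightarrow> F s t \<le> F s' t"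
    and F_e: "\<forall>s\<in>{x..e}. F s e = s"
    and F_x: "\<forall>s\<in>{x..e}. F s x = f s"
    and F_assoc: "\<forall>s\<in>{x<..e}. \<forall>t\<in>{x<..e}. \<forall>u\<in>{x<..e}. \<forall>n\<in>{0::int,1}. \<forall>m\<in>{0::int,1}.
        F s t \<in> {fiter f (n + 1) e<..fiter f n e} \<longrightarrow>
        F t u \<in> {fiter f (m + 1) e<..fiter f m e} \<longrightarrow>
        fiter f m (F s (fiter f (- m) (F t u))) = fiter f n (F (fiter f (- n) (F s t)) u)"
begin

abbreviation U :: "real \<Rightarrow> real \<Rightarrow> real" where
  "U \<equiv> Uext f F e"

lemma U_eq: "U s t = fiter f (level s + level t) (F (rep s) (rep t))"
  by (simp add: Uext_def rep_def)

lemma F_in_01: "p \<in> {x..e} \<Longrightarrow> q \<in> {x..e} \<Longrightarrow> F p q \<in> {0..1}"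
  using F_range fiter_in[OF x_in, of 1] e_in by fastforce

lemma F_values:
  assumes p: "p \<in> {x<..e}" and q: "q \<in> {x<..e}"
  shows F_mem_domain: "F p q \<in> {a<..<d}"
    and level_F: "level (F p q) \<in> {0, 1}"
proof -
  have "F x q \<le> F p q"
    using F_mono1 p q x_less_e by fastforce
  moreover have "F x q = f q"
    using F_comm F_x q x_less_e by fastforce
  moreover have "f x < f q"
    using strict_mono_onD[OF f_strict_mono x_in fundamental_domain_01[OF q]] q by simp
  moreover have "E 2 = f x"
    using fiter_x[of 1] by simp
  moreover have "F p q \<le> E 0"
    using F_range p q by fastforce
  ultimately have F_between: "E 2 < F p q" "F p q \<le> E 0"
    by simp_all
  then show F_dom: "F p q \<in> {a<..<d}"
    using a_less_E[of 2] E_less_d[of 0] by simp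
  have "E (level (F p q) + 1) < E 0" "E 2 < E (level (F p q))"
    using level_bounds[OF F_dom] F_between by auto
  then show "level (F p q) \<in> {0, 1}"
    unfolding E_less_iff by auto
qed

lemma U_as_fiter:
  assumes s: "s \<in> {a<..<d}" and t: "t \<in> {a<..<d}"
  defines "v \<equiv> F (rep s) (rep t)"
  shows "U s t = fiter f (level s + level t + level v) (rep v)"
proof -
  have "v \<in> {a<..<d}"
    unfolding v_def using F_mem_domain rep_in s t by blast
  then have "U s t = fiter f (level s + level t) (fiter f (level v) (rep v))"
    using U_eq fiter_level_rep unfolding v_def by simp
  also have "\<dots> = fiter f (level s + level t + level v) (rep v)"
    using fiter_add[OF fundamental_domain_01[OF rep_in]] \<open>v \<in> {a<..<d}\<close> by simp
  finally show ?thesis .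
qed

lemma U_decomposition:
  assumes s: "s \<in> {a<..<d}" and t: "t \<in> {a<..<d}"
  defines "v \<equiv> F (rep s) (rep t)"
  shows U_mem_domain: "U s t \<in> {a<..<d}"
    and level_U: "level (U s t) = level s + level t + level v"
    and rep_U: "rep (U s t) = rep v"
proof -
  have "rep v \<in> {x<..e}"
    unfolding v_def using F_mem_domain rep_in s t by blast
  then show "U s t \<in> {a<..<d}" "level (U s t) = level s + level t + level v" "rep (U s t) = rep v"
    using fiter_fundamental_domain U_as_fiter[OF s t] unfolding v_def by simp_all
qed

lemma U_comm: "s \<in> {a<..<d} \<Longrightarrow> t \<in> {a<..<d} \<Longrightarrow> U s t = U t s"
  using U_eq F_comm rep_in_01 by (simp add: add.commute)

lemma U_mono1:
  assumes s: "s \<in> {a<..<d}" and s': "s' \<in> {a<..<d}" and t: "t \<in> {a<..<d}"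
    and "s \<le> s'"
  shows "U s t \<le> U s' t"
proof (cases "level s = level s'")
  case True
  have "s \<in> {0..1}" "s' \<in> {0..1}"
    using domain_subset s s' by auto
  then have "rep s \<le> rep s'"
    unfolding rep_def using True fiter_le_iff \<open>s \<le> s'\<close> by simp
  then have "F (rep s) (rep t) \<le> F (rep s') (rep t)"
    using F_mono1 rep_in_01 s s' t by blast
  then show ?thesis
    using U_eq True fiter_le_iff F_in_01 rep_in_01 s s' t by simp
next
  case False
  have "level s' \<le> level s"
    using level_bounds[OF s] level_bounds[OF s'] \<open>s \<le> s'\<close> E_le_iff[of "level s'" "level s + 1"]
    by linarith
  with False have shift: "level s' + level t + 1 \<le> level s + level t"
    by simp
  have rt: "rep t \<in> {x..e}" and rt': "rep t \<in> {x<..e}"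
    using rep_in_01[OF t] rep_in[OF t] .
  have "U s t = fiter f (level s + level t) (F (rep s) (rep t))"
    by (rule U_eq)
  also have "\<dots> \<le> fiter f (level s + level t) (F e (rep t))"
    using fiter_le_iff F_in_01 F_mono1 rep_in_01[OF s] rt x_less_e by simp
  also have "F e (rep t) = rep t"
    using F_comm F_e rt x_less_e by fastforce
  also have "fiter f (level s + level t) (rep t) \<le> fiter f (level s' + level t + 1) (rep t)"
    using fiter_antimono[OF rt' shift] .
  also have "\<dots> = fiter f (level s' + level t) (f (rep t))"
    using fiter_add[OF fundamental_domain_01[OF rt'], of "level s' + level t" 1] by simp
  also have "f (rep t) = F x (rep t)"
    using F_comm F_x rt x_less_e by fastforce
  also have "fiter f (level s' + level t) (F x (rep t)) \<le> fiter f (level s' + level t) (F (rep s') (rep t))"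
    using fiter_le_iff F_in_01 F_mono1 rep_in_01[OF s'] rt x_less_e by simp
  also have "\<dots> = U s' t"
    by (rule U_eq[symmetric])
  finally show ?thesis .
qed

lemma e_mem_domain: "e \<in> {a<..<d}" and level_e: "level e = 0" and rep_e: "rep e = e"
  using fiter_fundamental_domain[of e 0] x_less_e by auto

lemma U_neutral: "s \<in> {a<..<d} \<Longrightarrow> U s e = s"
  using U_eq[of s e] level_e rep_e F_e rep_in_01 fiter_level_rep by simp

lemma U_assoc:
  assumes s: "s \<in> {a<..<d}" and t: "t \<in> {a<..<d}" and u: "u \<in> {a<..<d}"
  shows "U s (U t u) = U (U s t) u"
proof -
  define vs where "vs = F (rep s) (rep t)"
  define vt where "vt = F (rep t) (rep u)"
  have vs: "vs \<in> {a<..<d}" "level vs \<in> {0, 1}" and vt: "vt \<in> {a<..<d}" "level vt \<in> {0, 1}"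
    unfolding vs_def vt_def using F_values rep_in s t u by blast+
  have F_assoc_levels:
    "fiter f (level vt) (F (rep s) (rep vt)) = fiter f (level vs) (F (rep vs) (rep u))"
    using F_assoc rep_in[OF s] rep_in[OF t] rep_in[OF u] vs(2) vt(2) level_bounds[OF vs(1)]
      level_bounds[OF vt(1)]
    unfolding vs_def vt_def rep_def by auto
  have "U s (U t u) = fiter f (level s + level t + level u + level vt) (F (rep s) (rep vt))"
    using U_eq[of s "U t u"] level_U[OF t u] rep_U[OF t u] unfolding vt_def
    by (simp add: algebra_simps)
  also have "\<dots> = fiter f (level s + level t + level u) (fiter f (level vt) (F (rep s) (rep vt)))"
    using fiter_add F_in_01 rep_in_01 s vt(1) by simp
  also have "\<dots> = fiter f (level s + level t + level u) (fiter f (level vs) (F (rep vs) (rep u)))"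
    by (simp only: F_assoc_levels)
  also have "\<dots> = fiter f (level s + level t + level u + level vs) (F (rep vs) (rep u))"
    using fiter_add F_in_01 rep_in_01 u vs(1) by simp
  also have "\<dots> = U (U s t) u"
    using U_eq[of "U s t" u] level_U[OF s t] rep_U[OF s t] unfolding vs_def
    by (simp add: algebra_simps)
  finally show ?thesis .
qed

lemma uninorm: "uninorm_on {a<..<d} U e"
  by (rule uninorm_onI[OF e_mem_domain U_mem_domain U_comm U_assoc U_mono1 U_neutral])

end

theorem mainTheorem9:
  fixes f :: "real \<Rightarrow> real" and F :: "real \<Rightarrow> real \<Rightarrow> real"
    and y e x a d :: real
  assumes f_cont: "continuous_on {0..1} f"
    and f_mono: "strict_mono_on {0..1} f"
    and f_bij: "bij_betw f {0..1} {0..1}"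
    and f0: "f 0 = 0" and f1: "f 1 = 1"
    and y_in: "y \<in> {0<..<1}" and e_in: "e \<in> {0<..<1}"
    and ye: "y > e" and fy: "f y = e"
    and x_def: "x = f e"
    and a_lim: "(\<lambda>n. fiter f (int n) x) \<longlonglongrightarrow> a"
    and d_lim: "(\<lambda>n. fiter f (- int n) x) \<longlonglongrightarrow> d"
    and F_range: "\<forall>s\<in>{x..e}. \<forall>t\<in>{x..e}. F s t \<in> {f x..e}"
    and F_comm: "\<forall>s\<in>{x..e}. \<forall>t\<in>{x..e}. F s t = F t s"
    and F_mono1: "\<forall>s\<in>{x..e}. \<forall>s'\<in>{x..e}. \<forall>t\<in>{x..e}. s \<le> s' \<longrightarrow> F s t \<le> F s' t"
    and F_mono2: "\<forall>s\<in>{x..e}. \<forall>t\<in>{x..e}. \<forall>t'\<in>{x..e}. t \<le> t' \<longrightarrow> F s t \<le> F s t'"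
    and F_e: "\<forall>s\<in>{x..e}. F s e = s"
    and F_x: "\<forall>s\<in>{x..e}. F s x = f s"
    and F_assoc: "\<forall>s\<in>{x<..e}. \<forall>t\<in>{x<..e}. \<forall>u\<in>{x<..e}. \<forall>n\<in>{0::int,1}. \<forall>m\<in>{0::int,1}.
        F s t \<in> {fiter f (n + 1) e<..fiter f n e} \<longrightarrow>
        F t u \<in> {fiter f (m + 1) e<..fiter f m e} \<longrightarrow>
        fiter f m (F s (fiter f (- m) (F t u))) = fiter f n (F (fiter f (- n) (F s t)) u)"
  shows "(\<forall>s\<in>{a<..<d}. \<exists>!n::int. fiter f (n + 1) e < s \<and> s \<le> fiter f n e)
         \<and> uninorm_on {a<..<d} (Uext f F e) e"
proof -
  have "x < e"
    using strict_mono_onD[OF f_mono, of e y] e_in y_in ye fy x_def by auto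
  with assms interpret uninorm_construction f e x a d F
    by unfold_locales auto
  show ?thesis
    using level_ex1 uninorm by blast
qed

end
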